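(* Let $M$ be a centrally endo-AIP right $R$-module, $S=\mathrm{End}_R(M)$, and let $N$ be a fully invariant submodule of $M$ with $T=\mathrm{End}_R(N)$. If every $\psi\in T$ extends to some $\bar\psi\in S$ (i.e. $\bar\psi|_N=\psi$), then $N$ is a centrally endo-AIP module.
   Context: For a module $X$ with $E=\mathrm{End}_R(X)$ and $K\le X$, $l_E(K)=\{\phi\in E:\phi(K)=0\}$. An ideal $I$ of $E$ is centrally s-unital if for every $a\in I$ there is $z\in I$ central in $E$ with $az=a$. $X$ is centrally endo-AIP if $l_E(K)$ is a centrally s-unital ideal of $E$ for every fully invariant submodule $K$ of $X$. *)

theory Defs
  imports "HOL-Algebra.Algebra" "HOL-Library.FuncSet"
begin

text \<open>The module is an abelian group M (HOL-Algebra ring-record, only the additive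
  part is used) together with a right scalar action act m r = m r.\<close>

definition right_module ::
  "('r, 'a) ring_scheme \<Rightarrow> ('m, 'b) ring_scheme \<Rightarrow> ('m \<Rightarrow> 'r \<Rightarrow> 'm) \<Rightarrow> bool" where
  "right_module R M act \<longleftrightarrow> ring R \<and> abelian_group M \<and>
     (\<forall>m\<in>carrier M. \<forall>r\<in>carrier R. act m r \<in> carrier M) \<and>
     (\<forall>m\<in>carrier M. \<forall>n\<in>carrier M. \<forall>r\<in>carrier R.
         act (m \<oplus>\<^bsub>M\<^esub> n) r = act m r \<oplus>\<^bsub>M\<^esub> act n r) \<and>
     (\<forall>m\<in>carrier M. \<forall>r\<in>carrier R. \<forall>s\<in>carrier R.
         act m (r \<oplus>\<^bsub>R\<^esub> s) = act m r \<oplus>\<^bsub>M\<^esub> act m s) \<and>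
     (\<forall>m\<in>carrier M. \<forall>r\<in>carrier R. \<forall>s\<in>carrier R.
         act m (r \<otimes>\<^bsub>R\<^esub> s) = act (act m r) s) \<and>
     (\<forall>m\<in>carrier M. act m \<one>\<^bsub>R\<^esub> = m)"

definition submodule ::
  "('r, 'a) ring_scheme \<Rightarrow> ('m, 'b) ring_scheme \<Rightarrow> ('m \<Rightarrow> 'r \<Rightarrow> 'm) \<Rightarrow> 'm set \<Rightarrow> bool" where
  "submodule R M act K \<longleftrightarrow> K \<subseteq> carrier M \<and> subgroup K (add_monoid M) \<and>
     (\<forall>k\<in>K. \<forall>r\<in>carrier R. act k r \<in> K)"

definition End_set ::
  "('r, 'a) ring_scheme \<Rightarrow> ('m, 'b) ring_scheme \<Rightarrow> ('m \<Rightarrow> 'r \<Rightarrow> 'm) \<Rightarrow> ('m \<Rightarrow> 'm) set" where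
  "End_set R Q act = {f. f \<in> PiE (carrier Q) (\<lambda>_. carrier Q) \<and>
     (\<forall>x\<in>carrier Q. \<forall>y\<in>carrier Q. f (x \<oplus>\<^bsub>Q\<^esub> y) = f x \<oplus>\<^bsub>Q\<^esub> f y) \<and>
     (\<forall>x\<in>carrier Q. \<forall>r\<in>carrier R. f (act x r) = act (f x) r)}"

definition End_ring ::
  "('r, 'a) ring_scheme \<Rightarrow> ('m, 'b) ring_scheme \<Rightarrow> ('m \<Rightarrow> 'r \<Rightarrow> 'm) \<Rightarrow> ('m \<Rightarrow> 'm) ring" where
  "End_ring R Q act =
     \<lparr>carrier = End_set R Q act,
      monoid.mult = (\<lambda>f g. compose (carrier Q) f g),
      monoid.one = (\<lambda>x\<in>carrier Q. x),
      ring.zero = (\<lambda>x\<in>carrier Q. \<zero>\<^bsub>Q\<^esub>),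
      ring.add = (\<lambda>f g. \<lambda>x\<in>carrier Q. f x \<oplus>\<^bsub>Q\<^esub> g x)\<rparr>"

definition fully_invariant ::
  "('r, 'a) ring_scheme \<Rightarrow> ('m, 'b) ring_scheme \<Rightarrow> ('m \<Rightarrow> 'r \<Rightarrow> 'm) \<Rightarrow> 'm set \<Rightarrow> bool" where
  "fully_invariant R Q act K \<longleftrightarrow> submodule R Q act K \<and>
     (\<forall>f\<in>End_set R Q act. f ` K \<subseteq> K)"

definition l_ann ::
  "('r, 'a) ring_scheme \<Rightarrow> ('m, 'b) ring_scheme \<Rightarrow> ('m \<Rightarrow> 'r \<Rightarrow> 'm) \<Rightarrow> 'm set \<Rightarrow> ('m \<Rightarrow> 'm) set" where
  "l_ann R Q act K = {\<phi> \<in> End_set R Q act. \<forall>k\<in>K. \<phi> k = \<zero>\<^bsub>Q\<^esub>}"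

definition centrally_s_unital :: "'e set \<Rightarrow> ('e, 'c) ring_scheme \<Rightarrow> bool" where
  "centrally_s_unital I E \<longleftrightarrow> ideal I E \<and>
     (\<forall>a\<in>I. \<exists>z\<in>I. (\<forall>x\<in>carrier E. z \<otimes>\<^bsub>E\<^esub> x = x \<otimes>\<^bsub>E\<^esub> z) \<and> a \<otimes>\<^bsub>E\<^esub> z = a)"

definition centrally_endo_AIP ::
  "('r, 'a) ring_scheme \<Rightarrow> ('m, 'b) ring_scheme \<Rightarrow> ('m \<Rightarrow> 'r \<Rightarrow> 'm) \<Rightarrow> bool" where
  "centrally_endo_AIP R Q act \<longleftrightarrow>
     (\<forall>K. fully_invariant R Q act K \<longrightarrow>
        centrally_s_unital (l_ann R Q act K) (End_ring R Q act))"

end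

theory Submission
  imports Defs
begin

text \<open>Write \<open>S = End(M)\<close> and \<open>T = End(N)\<close>. As \<open>N\<close> is fully invariant, restriction to \<open>N\<close> is a
  multiplicative map \<open>S \<rightarrow> T\<close>; the extension hypothesis makes it surjective, and for \<open>K \<subseteq> N\<close>
  it maps \<open>l\<^sub>S(K)\<close> onto \<open>l\<^sub>T(K)\<close>. A fully invariant submodule \<open>K\<close> of \<open>N\<close> is fully invariant
  in \<open>M\<close>, since every endomorphism of \<open>M\<close> restricts to one of \<open>N\<close>. So \<open>l\<^sub>S(K)\<close> is centrally
  s-unital, and a surjective multiplicative map carries central s-units of \<open>l\<^sub>S(K)\<close> to central
  s-units of its image \<open>l\<^sub>T(K)\<close>.\<close>

lemma centrally_s_unital_image:
  fixes S (structure) and T (structure)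
  assumes I: "centrally_s_unital I S" and J: "ideal J T"
    and h_surj: "h ` carrier S = carrier T" and h_I: "h ` I = J"
    and h_mult: "\<And>x y. x \<in> carrier S \<Longrightarrow> y \<in> carrier S \<Longrightarrow> h (x \<otimes> y) = h x \<otimes>\<^bsub>T\<^esub> h y"
  shows "centrally_s_unital J T"
  unfolding centrally_s_unital_def
proof (intro conjI ballI J)
  fix a assume "a \<in> J"
  then obtain b where b: "b \<in> I" "h b = a"
    using h_I by blast
  have I_carrier: "I \<subseteq> carrier S"
    using I by (simp add: centrally_s_unital_def ideal_def additive_subgroup.a_subset)
  obtain z where z: "z \<in> I" "\<And>x. x \<in> carrier S \<Longrightarrow> z \<otimes> x = x \<otimes> z" "b \<otimes> z = b"
    using I b(1) unfolding centrally_s_unital_def by blast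
  have zS: "z \<in> carrier S" and bS: "b \<in> carrier S"
    using z(1) b(1) I_carrier by auto
  have "h z \<otimes>\<^bsub>T\<^esub> h x = h x \<otimes>\<^bsub>T\<^esub> h z" if "x \<in> carrier S" for x
  proof -
    have "h z \<otimes>\<^bsub>T\<^esub> h x = h (z \<otimes> x)"
      using h_mult[OF zS that] by (rule sym)
    also have "\<dots> = h (x \<otimes> z)"
      using z(2)[OF that] by (rule arg_cong)
    also have "\<dots> = h x \<otimes>\<^bsub>T\<^esub> h z"
      using h_mult[OF that zS] .
    finally show ?thesis .
  qed
  then have "\<forall>y\<in>carrier T. h z \<otimes>\<^bsub>T\<^esub> y = y \<otimes>\<^bsub>T\<^esub> h z"
    unfolding h_surj[symmetric] by blast
  moreover have "a \<otimes>\<^bsub>T\<^esub> h z = a"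
    using h_mult[OF bS zS] z(3) b(2) by (simp only:)
  ultimately show "\<exists>z'\<in>J. (\<forall>y\<in>carrier T. z' \<otimes>\<^bsub>T\<^esub> y = y \<otimes>\<^bsub>T\<^esub> z') \<and> a \<otimes>\<^bsub>T\<^esub> z' = a"
    using z(1) h_I by blast
qed

lemma abelian_group_carrier_update:
  assumes "abelian_group M" "subgroup N (add_monoid M)"
  shows "abelian_group (M\<lparr>carrier := N\<rparr>)"
proof -
  interpret M: abelian_group M by (rule assms(1))
  interpret N: subgroup N "add_monoid M" by (rule assms(2))
  have sub: "x \<in> N \<Longrightarrow> x \<in> carrier M" for x
    using N.subset by auto
  show ?thesis
  proof (rule abelian_groupI)
    fix x assume x: "x \<in> carrier (M\<lparr>carrier := N\<rparr>)"
    have "\<ominus>\<^bsub>M\<^esub> x \<in> N"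
      using N.m_inv_closed x by (simp add: a_inv_def)
    moreover have "\<ominus>\<^bsub>M\<^esub> x \<oplus>\<^bsub>M\<^esub> x = \<zero>\<^bsub>M\<^esub>"
      using x sub by (simp add: M.l_neg)
    ultimately show "\<exists>y\<in>carrier (M\<lparr>carrier := N\<rparr>). y \<oplus>\<^bsub>M\<lparr>carrier := N\<rparr>\<^esub> x = \<zero>\<^bsub>M\<lparr>carrier := N\<rparr>\<^esub>"
      by auto
  qed (use N.m_closed N.one_closed sub M.a_assoc M.a_comm in simp_all)
qed

lemma right_module_carrier_update:
  assumes M: "right_module R M act" and N: "submodule R M act N"
  shows "right_module R (M\<lparr>carrier := N\<rparr>) act"
proof -
  have sub: "x \<in> N \<Longrightarrow> x \<in> carrier M" for x
    using N by (auto simp: submodule_def)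
  have "abelian_group M"
    using M by (simp add: right_module_def)
  moreover have "subgroup N (add_monoid M)"
    using N by (simp add: submodule_def)
  ultimately have "abelian_group (M\<lparr>carrier := N\<rparr>)"
    by (rule abelian_group_carrier_update)
  moreover have "\<forall>k\<in>N. \<forall>r\<in>carrier R. act k r \<in> N"
    using N by (simp add: submodule_def)
  ultimately show ?thesis
    using M sub unfolding right_module_def by simp
qed

lemma End_set_eqI:
  "f \<in> End_set R Q act \<Longrightarrow> g \<in> End_set R Q act \<Longrightarrow> (\<And>x. x \<in> carrier Q \<Longrightarrow> f x = g x) \<Longrightarrow> f = g"
  unfolding End_set_def by (blast intro: PiE_ext)

lemma End_setD:
  assumes "f \<in> End_set R Q act"
  shows End_set_closed: "x \<in> carrier Q \<Longrightarrow> f x \<in> carrier Q"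
    and End_set_add: "x \<in> carrier Q \<Longrightarrow> y \<in> carrier Q \<Longrightarrow> f (x \<oplus>\<^bsub>Q\<^esub> y) = f x \<oplus>\<^bsub>Q\<^esub> f y"
  using assms unfolding End_set_def by (simp_all add: PiE_iff)

lemma End_ring_simps:
  "carrier (End_ring R Q act) = End_set R Q act"
  "f \<otimes>\<^bsub>End_ring R Q act\<^esub> g = compose (carrier Q) f g"
  "\<one>\<^bsub>End_ring R Q act\<^esub> = (\<lambda>x\<in>carrier Q. x)"
  "\<zero>\<^bsub>End_ring R Q act\<^esub> = (\<lambda>x\<in>carrier Q. \<zero>\<^bsub>Q\<^esub>)"
  "f \<oplus>\<^bsub>End_ring R Q act\<^esub> g = (\<lambda>x\<in>carrier Q. f x \<oplus>\<^bsub>Q\<^esub> g x)"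
  by (simp_all add: End_ring_def)

locale right_mod =
  fixes R :: "('r, 'a) ring_scheme" and Q :: "('m, 'b) ring_scheme" and act :: "'m \<Rightarrow> 'r \<Rightarrow> 'm"
  assumes right_module: "right_module R Q act"
begin

interpretation Q: abelian_group Q
  using right_module by (simp add: right_module_def)

lemma act_closed: "x \<in> carrier Q \<Longrightarrow> r \<in> carrier R \<Longrightarrow> act x r \<in> carrier Q"
  and act_add: "x \<in> carrier Q \<Longrightarrow> y \<in> carrier Q \<Longrightarrow> r \<in> carrier R \<Longrightarrow>
      act (x \<oplus>\<^bsub>Q\<^esub> y) r = act x r \<oplus>\<^bsub>Q\<^esub> act y r"
  using right_module by (simp_all add: right_module_def)

lemma act_zero: "r \<in> carrier R \<Longrightarrow> act \<zero>\<^bsub>Q\<^esub> r = \<zero>\<^bsub>Q\<^esub>"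
  using act_add[of "\<zero>\<^bsub>Q\<^esub>" "\<zero>\<^bsub>Q\<^esub>" r] act_closed[of "\<zero>\<^bsub>Q\<^esub>" r]
  by (metis Q.l_zero Q.r_zero Q.zero_closed Q.add.l_cancel)

lemma act_a_inv: "x \<in> carrier Q \<Longrightarrow> r \<in> carrier R \<Longrightarrow> act (\<ominus>\<^bsub>Q\<^esub> x) r = \<ominus>\<^bsub>Q\<^esub> act x r"
  using act_add[of "\<ominus>\<^bsub>Q\<^esub> x" x r] act_closed[of x r] act_closed[of "\<ominus>\<^bsub>Q\<^esub> x" r]
  by (simp add: Q.l_neg act_zero Q.minus_equality)

lemma End_set_zero_closed: "(\<lambda>x\<in>carrier Q. \<zero>\<^bsub>Q\<^esub>) \<in> End_set R Q act"
  unfolding End_set_def using act_zero act_closed by auto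

lemma End_set_id_closed: "(\<lambda>x\<in>carrier Q. x) \<in> End_set R Q act"
  unfolding End_set_def using act_closed by auto

lemma End_set_add_closed:
  "f \<in> End_set R Q act \<Longrightarrow> g \<in> End_set R Q act \<Longrightarrow>
   (\<lambda>x\<in>carrier Q. f x \<oplus>\<^bsub>Q\<^esub> g x) \<in> End_set R Q act"
  unfolding End_set_def using act_add act_closed by (auto simp: PiE_def Pi_def Q.a_ac)

lemma End_set_a_inv_closed:
  "f \<in> End_set R Q act \<Longrightarrow> (\<lambda>x\<in>carrier Q. \<ominus>\<^bsub>Q\<^esub> f x) \<in> End_set R Q act"
  unfolding End_set_def using act_a_inv act_closed by (auto simp: PiE_def Pi_def Q.minus_add)

lemma End_set_compose_closed:
  "f \<in> End_set R Q act \<Longrightarrow> g \<in> End_set R Q act \<Longrightarrow> compose (carrier Q) f g \<in> End_set R Q act"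
  unfolding End_set_def using act_closed by (auto simp: PiE_def Pi_def compose_def)

abbreviation E where "E \<equiv> End_ring R Q act"

lemma End_ring_closed:
  "f \<in> End_set R Q act \<Longrightarrow> g \<in> End_set R Q act \<Longrightarrow> f \<oplus>\<^bsub>E\<^esub> g \<in> End_set R Q act"
  "f \<in> End_set R Q act \<Longrightarrow> g \<in> End_set R Q act \<Longrightarrow> f \<otimes>\<^bsub>E\<^esub> g \<in> End_set R Q act"
  "\<zero>\<^bsub>E\<^esub> \<in> End_set R Q act" "\<one>\<^bsub>E\<^esub> \<in> End_set R Q act"
  by (simp_all add: End_ring_simps End_set_add_closed End_set_compose_closed
      End_set_zero_closed End_set_id_closed)

lemma End_ring_apply:
  "x \<in> carrier Q \<Longrightarrow> (f \<oplus>\<^bsub>E\<^esub> g) x = f x \<oplus>\<^bsub>Q\<^esub> g x"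
  "x \<in> carrier Q \<Longrightarrow> (f \<otimes>\<^bsub>E\<^esub> g) x = f (g x)"
  "x \<in> carrier Q \<Longrightarrow> \<zero>\<^bsub>E\<^esub> x = \<zero>\<^bsub>Q\<^esub>"
  "x \<in> carrier Q \<Longrightarrow> \<one>\<^bsub>E\<^esub> x = x"
  by (simp_all add: End_ring_simps compose_def)

lemma ring_End_ring: "ring E"
proof (rule ringI)
  show "abelian_group E"
  proof (rule abelian_groupI)
    fix f assume f: "f \<in> carrier E"
    show "\<exists>g\<in>carrier E. g \<oplus>\<^bsub>E\<^esub> f = \<zero>\<^bsub>E\<^esub>"
    proof
      show "(\<lambda>x\<in>carrier Q. \<ominus>\<^bsub>Q\<^esub> f x) \<in> carrier E"
        using f End_set_a_inv_closed by (simp add: End_ring_simps)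
      show "(\<lambda>x\<in>carrier Q. \<ominus>\<^bsub>Q\<^esub> f x) \<oplus>\<^bsub>E\<^esub> f = \<zero>\<^bsub>E\<^esub>"
        using f by (auto simp: End_ring_simps End_set_closed Q.l_neg intro!: restrict_ext)
    qed
  qed (auto simp: End_ring_simps(1) End_ring_closed End_ring_apply End_set_closed Q.a_ac
        intro!: End_set_eqI[where R = R and Q = Q and act = act])
next
  show "monoid E"
    by (rule monoidI)
      (auto simp: End_ring_simps(1) End_ring_closed End_ring_apply End_set_closed
        intro!: End_set_eqI[where R = R and Q = Q and act = act])
qed (auto simp: End_ring_simps(1) End_ring_closed End_ring_apply End_set_closed End_set_add
      intro!: End_set_eqI[where R = R and Q = Q and act = act])

lemma End_set_zero: "f \<in> End_set R Q act \<Longrightarrow> f \<zero>\<^bsub>Q\<^esub> = \<zero>\<^bsub>Q\<^esub>"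
  using End_set_add[of f R Q act "\<zero>\<^bsub>Q\<^esub>" "\<zero>\<^bsub>Q\<^esub>"] End_set_closed[of f R Q act "\<zero>\<^bsub>Q\<^esub>"]
  by (metis Q.l_zero Q.r_zero Q.zero_closed Q.add.l_cancel)

lemma l_ann_ideal:
  assumes "fully_invariant R Q act K"
  shows "ideal (l_ann R Q act K) E"
proof -
  interpret E: ring E by (rule ring_End_ring)
  let ?I = "l_ann R Q act K"
  have K: "K \<subseteq> carrier Q" "\<And>f. f \<in> End_set R Q act \<Longrightarrow> f ` K \<subseteq> K"
    using assms by (auto simp: fully_invariant_def submodule_def)
  have I: "?I \<subseteq> carrier E"
    by (auto simp: l_ann_def End_ring_simps)
  have l_closed: "f \<otimes>\<^bsub>E\<^esub> a \<in> ?I" if "a \<in> ?I" "f \<in> carrier E" for a f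
    using that K End_ring_closed(2) End_set_zero[of f]
    by (auto simp: l_ann_def End_ring_simps compose_def)
  have r_closed: "a \<otimes>\<^bsub>E\<^esub> f \<in> ?I" if "a \<in> ?I" "f \<in> carrier E" for a f
    using that K End_ring_closed(2)
    by (auto simp: l_ann_def End_ring_simps compose_def image_subset_iff)
  have "subgroup ?I (add_monoid E)"
  proof (rule group.subgroupI[OF E.a_group])
    show "?I \<subseteq> carrier (add_monoid E)"
      using I by simp
    show "?I \<noteq> {}"
      using K(1) End_set_zero_closed
      by (auto simp: l_ann_def intro!: exI[of _ "\<lambda>x\<in>carrier Q. \<zero>\<^bsub>Q\<^esub>"])
  next
    fix a assume a: "a \<in> ?I"
    have "\<ominus>\<^bsub>E\<^esub> a = (\<ominus>\<^bsub>E\<^esub> \<one>\<^bsub>E\<^esub>) \<otimes>\<^bsub>E\<^esub> a"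
      using a I by (simp add: E.l_minus subsetD)
    then show "inv\<^bsub>add_monoid E\<^esub> a \<in> ?I"
      using l_closed[OF a E.a_inv_closed[OF E.one_closed]] by (simp add: a_inv_def)
  next
    fix a b assume "a \<in> ?I" "b \<in> ?I"
    then show "a \<otimes>\<^bsub>add_monoid E\<^esub> b \<in> ?I"
      using K End_ring_closed(1) by (auto simp: l_ann_def End_ring_simps)
  qed
  with E.ring_axioms show ?thesis
    by (rule idealI) (auto intro: l_closed r_closed)
qed

end

lemma restrict_End_set:
  assumes N: "fully_invariant R M act N" and f: "f \<in> End_set R M act"
  shows "restrict f N \<in> End_set R (M\<lparr>carrier := N\<rparr>) act"
proof -
  have "N \<subseteq> carrier M" "f ` N \<subseteq> N" "\<And>x r. x \<in> N \<Longrightarrow> r \<in> carrier R \<Longrightarrow> act x r \<in> N"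
    using N f by (simp_all add: fully_invariant_def submodule_def)
  moreover have "\<And>x y. x \<in> N \<Longrightarrow> y \<in> N \<Longrightarrow> x \<oplus>\<^bsub>M\<^esub> y \<in> N"
    using N subgroup.m_closed by (fastforce simp: fully_invariant_def submodule_def)
  ultimately show ?thesis
    using f unfolding End_set_def by (auto simp: PiE_def Pi_def subset_iff)
qed

lemma restrict_End_ring_mult:
  assumes "fully_invariant R M act N" "f \<in> End_set R M act" "g \<in> End_set R M act"
  shows "restrict (f \<otimes>\<^bsub>End_ring R M act\<^esub> g) N
    = restrict f N \<otimes>\<^bsub>End_ring R (M\<lparr>carrier := N\<rparr>) act\<^esub> restrict g N"
proof -
  have "N \<subseteq> carrier M" "g ` N \<subseteq> N"
    using assms by (auto simp: fully_invariant_def submodule_def)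
  then show ?thesis
    by (auto simp: End_ring_simps compose_def fun_eq_iff image_subset_iff)
qed

lemma fully_invariant_trans:
  assumes M: "right_module R M act" and N: "fully_invariant R M act N"
    and K: "fully_invariant R (M\<lparr>carrier := N\<rparr>) act K"
  shows "fully_invariant R M act K"
proof -
  have KN: "K \<subseteq> N" and K_act: "\<forall>k\<in>K. \<forall>r\<in>carrier R. act k r \<in> K"
    using K by (simp_all add: fully_invariant_def submodule_def)
  have "group (add_monoid M)"
    using M by (simp add: right_module_def abelian_group.a_group)
  moreover have "subgroup N (add_monoid M)" "subgroup K ((add_monoid M)\<lparr>carrier := N\<rparr>)"
    using N K by (simp_all add: fully_invariant_def submodule_def)
  ultimately have "subgroup K (add_monoid M)"
    by (rule group.incl_subgroup)
  moreover have "K \<subseteq> carrier M"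
    using KN N by (auto simp: fully_invariant_def submodule_def)
  moreover have "f ` K \<subseteq> K" if "f \<in> End_set R M act" for f
  proof -
    have "restrict f N \<in> End_set R (M\<lparr>carrier := N\<rparr>) act"
      using N that by (rule restrict_End_set)
    then have "restrict f N ` K \<subseteq> K"
      using K unfolding fully_invariant_def by blast
    moreover have "restrict f N ` K = f ` K"
      using KN by (intro image_cong) auto
    ultimately show ?thesis
      by (simp only:)
  qed
  ultimately show ?thesis
    using K_act unfolding fully_invariant_def submodule_def by blast
qed

lemma restrict_End_set_image:
  assumes N: "fully_invariant R M act N"
    and extend: "\<forall>\<psi>\<in>End_set R (M\<lparr>carrier := N\<rparr>) act. \<exists>\<phi>\<in>End_set R M act. restrict \<phi> N = \<psi>"
  shows "(\<lambda>f. restrict f N) ` End_set R M act = End_set R (M\<lparr>carrier := N\<rparr>) act"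
proof
  show "(\<lambda>f. restrict f N) ` End_set R M act \<subseteq> End_set R (M\<lparr>carrier := N\<rparr>) act"
    using restrict_End_set[OF N] by (rule image_subsetI)
  show "End_set R (M\<lparr>carrier := N\<rparr>) act \<subseteq> (\<lambda>f. restrict f N) ` End_set R M act"
    using extend by (auto simp only: image_iff)
qed

lemma restrict_l_ann:
  assumes N: "fully_invariant R M act N" and "K \<subseteq> N"
    and extend: "\<forall>\<psi>\<in>End_set R (M\<lparr>carrier := N\<rparr>) act. \<exists>\<phi>\<in>End_set R M act. restrict \<phi> N = \<psi>"
  shows "(\<lambda>f. restrict f N) ` l_ann R M act K = l_ann R (M\<lparr>carrier := N\<rparr>) act K"
proof
  show "(\<lambda>f. restrict f N) ` l_ann R M act K \<subseteq> l_ann R (M\<lparr>carrier := N\<rparr>) act K"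
  proof (rule image_subsetI)
    fix f assume "f \<in> l_ann R M act K"
    with \<open>K \<subseteq> N\<close> show "restrict f N \<in> l_ann R (M\<lparr>carrier := N\<rparr>) act K"
      using restrict_End_set[OF N] by (auto simp: l_ann_def)
  qed
next
  show "l_ann R (M\<lparr>carrier := N\<rparr>) act K \<subseteq> (\<lambda>f. restrict f N) ` l_ann R M act K"
  proof
    fix \<psi> assume \<psi>: "\<psi> \<in> l_ann R (M\<lparr>carrier := N\<rparr>) act K"
    then obtain \<phi> where \<phi>: "\<phi> \<in> End_set R M act" "restrict \<phi> N = \<psi>"
      using extend by (auto simp: l_ann_def)
    have "\<phi> k = \<zero>\<^bsub>M\<^esub>" if "k \<in> K" for k
    proof -
      have "\<phi> k = \<psi> k"
        using \<phi>(2) \<open>K \<subseteq> N\<close> that by auto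
      then show ?thesis
        using \<psi> that by (simp add: l_ann_def)
    qed
    with \<phi> show "\<psi> \<in> (\<lambda>f. restrict f N) ` l_ann R M act K"
      by (auto simp: l_ann_def)
  qed
qed

theorem proposition2p8:
  fixes R :: "('r, 'a) ring_scheme" and M :: "('m, 'b) ring_scheme"
    and act :: "'m \<Rightarrow> 'r \<Rightarrow> 'm" and N :: "'m set"
  assumes "right_module R M act"
    and "centrally_endo_AIP R M act"
    and "fully_invariant R M act N"
    and "\<forall>\<psi>\<in>End_set R (M\<lparr>carrier := N\<rparr>) act.
           \<exists>\<phi>\<in>End_set R M act. restrict \<phi> N = \<psi>"
  shows "centrally_endo_AIP R (M\<lparr>carrier := N\<rparr>) act"
  unfolding centrally_endo_AIP_def
proof (intro allI impI)
  fix K assume K: "fully_invariant R (M\<lparr>carrier := N\<rparr>) act K"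
  then have "K \<subseteq> N"
    by (simp add: fully_invariant_def submodule_def)
  have "right_module R (M\<lparr>carrier := N\<rparr>) act"
    using assms(1,3) by (simp add: fully_invariant_def right_module_carrier_update)
  show "centrally_s_unital (l_ann R (M\<lparr>carrier := N\<rparr>) act K)
      (End_ring R (M\<lparr>carrier := N\<rparr>) act)"
  proof (rule centrally_s_unital_image[where h = "\<lambda>f. restrict f N"])
    show "centrally_s_unital (l_ann R M act K) (End_ring R M act)"
      using assms(2) fully_invariant_trans[OF assms(1,3) K] by (simp add: centrally_endo_AIP_def)
    show "ideal (l_ann R (M\<lparr>carrier := N\<rparr>) act K) (End_ring R (M\<lparr>carrier := N\<rparr>) act)"
      using \<open>right_module R (M\<lparr>carrier := N\<rparr>) act\<close> K
      by (rule right_mod.l_ann_ideal[OF right_mod.intro])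
    show "(\<lambda>f. restrict f N) ` carrier (End_ring R M act)
      = carrier (End_ring R (M\<lparr>carrier := N\<rparr>) act)"
      using assms(3,4) by (simp add: End_ring_simps(1) restrict_End_set_image)
    show "(\<lambda>f. restrict f N) ` l_ann R M act K = l_ann R (M\<lparr>carrier := N\<rparr>) act K"
      using assms(3) \<open>K \<subseteq> N\<close> assms(4) by (rule restrict_l_ann)
  qed (simp add: assms(3) End_ring_simps(1) restrict_End_ring_mult)
qed

end
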